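(* Let $K$ be a field of characteristic zero, $R=K[X_1,\ldots,X_n]$, $R_{n-1}=K[X_1,\ldots,X_{n-1}]$. Let $P$ be a prime ideal of $R$ and $I$ an ideal of $R$ with $\sqrt I=P$. If $\partial_n(I)\subseteq I$ (where $\partial_n=\partial/\partial X_n$), then $P=(P\cap R_{n-1})R$. *)

theory Defs
  imports Main "HOL-Library.Poly_Mapping"
begin

text \<open>Multivariate polynomials over a coefficient ring 'a, in variables X_0, X_1, ...
  (indexed by nat), represented as finitely supported maps from monomials
  (exponent vectors, nat => nat) to coefficients.
  The paper's variables X_1..X_n correspond to indices 0..n-1.\<close>

type_synonym 'a mpoly = "(nat \<Rightarrow>\<^sub>0 nat) \<Rightarrow>\<^sub>0 'a"

definition polyring :: "nat \<Rightarrow> 'a::comm_ring_1 mpoly set" where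
  "polyring n = {p. \<forall>m \<in> Poly_Mapping.keys p. Poly_Mapping.keys m \<subseteq> {..<n}}"

definition is_ideal :: "'a::comm_ring_1 set \<Rightarrow> 'a set \<Rightarrow> bool" where
  "is_ideal R I \<longleftrightarrow> I \<subseteq> R \<and> 0 \<in> I \<and> (\<forall>a\<in>I. \<forall>b\<in>I. a + b \<in> I)
     \<and> (\<forall>r\<in>R. \<forall>a\<in>I. r * a \<in> I)"

definition is_prime_ideal :: "'a::comm_ring_1 set \<Rightarrow> 'a set \<Rightarrow> bool" where
  "is_prime_ideal R P \<longleftrightarrow> is_ideal R P \<and> P \<noteq> R
     \<and> (\<forall>a\<in>R. \<forall>b\<in>R. a * b \<in> P \<longrightarrow> a \<in> P \<or> b \<in> P)"

definition radical :: "'a::comm_ring_1 set \<Rightarrow> 'a set \<Rightarrow> 'a set" where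
  "radical R I = {f \<in> R. \<exists>k::nat. f ^ k \<in> I}"

definition ideal_generated :: "'a::comm_ring_1 set \<Rightarrow> 'a set \<Rightarrow> 'a set" where
  "ideal_generated R S = \<Inter>{J. is_ideal R J \<and> S \<subseteq> J}"

definition pderiv_var :: "nat \<Rightarrow> 'a::comm_ring_1 mpoly \<Rightarrow> 'a mpoly" where
  "pderiv_var i p = (\<Sum>m\<in>Poly_Mapping.keys p.
      Poly_Mapping.single (m - Poly_Mapping.single i 1)
        (of_nat (Poly_Mapping.lookup m i) * Poly_Mapping.lookup p m))"

end

theory Submission
  imports Defs
begin

text \<open>
  Let D be the derivative in the last variable X. The radical of a D-stable ideal I is D-stable:
  if \<open>a\<^sup>k \<in> I\<close>, then by induction on j we get \<open>a\<^sup>k\<^sup>-\<^sup>j (D a)\<^sup>2\<^sup>j \<in> I\<close>, because multiplying the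
  derivative of this element by D a and subtracting a multiple of it leaves
  \<open>(k - j) a\<^sup>k\<^sup>-\<^sup>j\<^sup>-\<^sup>1 (D a)\<^sup>2\<^sup>j\<^sup>+\<^sup>2\<close>, and \<open>k - j\<close> is invertible in characteristic 0.
  A D-stable ideal P is extended from the polynomials not involving X: if \<open>f \<in> P\<close> has degree k
  in X, its top coefficient \<open>D\<^sup>k f / k!\<close> lies in P and does not involve X, and subtracting
  \<open>X\<^sup>k\<close> times it lowers the degree.
\<close>

abbreviation exp_var :: "nat \<Rightarrow> nat \<Rightarrow>\<^sub>0 nat" where
  "exp_var i \<equiv> Poly_Mapping.single i 1"

abbreviation var_degree_le :: "nat \<Rightarrow> nat \<Rightarrow> 'a::zero mpoly \<Rightarrow> bool" where
  "var_degree_le i d f \<equiv> \<forall>m\<in>Poly_Mapping.keys f. Poly_Mapping.lookup m i \<le> d"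

lemma poly_mapping_induct [case_names zero single add]:
  assumes "P 0" and "\<And>m c. P (Poly_Mapping.single m c)"
    and "\<And>f g. P f \<Longrightarrow> P g \<Longrightarrow> P (f + g)"
  shows "P p"
proof (induction p rule: Poly_Mapping.update_induct)
  case const
  then show ?case using assms(1) by simp
next
  case (update f a b)
  have "Poly_Mapping.update a b f = f + Poly_Mapping.single a b"
    using update.hyps(1)
    by (intro poly_mapping_eqI) (auto simp: lookup_update lookup_add lookup_single in_keys_iff)
  then show ?case using update assms(2,3) by simp
qed

lemma keys_add_nat:
  "Poly_Mapping.keys (a + b :: _ \<Rightarrow>\<^sub>0 nat) = Poly_Mapping.keys a \<union> Poly_Mapping.keys b"
  by (auto simp: in_keys_iff lookup_add)

lemma lookup_const_mult:
  "Poly_Mapping.lookup (Poly_Mapping.single 0 c * p) m = c * Poly_Mapping.lookup (p :: 'a::comm_ring_1 mpoly) m"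
  by (simp flip: mult_map_scale_conv_mult add: map.rep_eq when_def)

lemma lookup_monom_mult:
  "Poly_Mapping.lookup (Poly_Mapping.single a 1 * p) (a + t) = Poly_Mapping.lookup (p :: 'a::comm_ring_1 mpoly) t"
proof (induction p rule: poly_mapping_induct)
  case (single t' v)
  then show ?case by (simp add: mult_single lookup_single when_def)
next
  case (add f g)
  then show ?case by (simp add: distrib_left lookup_add)
qed simp

lemma keys_monom_mult:
  "m \<in> Poly_Mapping.keys (Poly_Mapping.single a 1 * (p :: 'a::comm_ring_1 mpoly))
    \<Longrightarrow> \<exists>t\<in>Poly_Mapping.keys p. m = a + t"
  using keys_mult[of "Poly_Mapping.single a 1" p] by (auto split: if_splits)

lemma minus_exp_var_eq_iff:
  "Poly_Mapping.lookup m i \<ge> 1 \<Longrightarrow> m - exp_var i = k \<longleftrightarrow> m = k + exp_var i"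
  unfolding poly_mapping_eq_iff fun_eq_iff
  by (auto simp: lookup_minus lookup_add lookup_single when_def split: if_splits)

lemma lookup_pderiv_var:
  "Poly_Mapping.lookup (pderiv_var i p) k =
     of_nat (Poly_Mapping.lookup k i + 1) * Poly_Mapping.lookup p (k + exp_var i)"
proof -
  define c where "c m = of_nat (Poly_Mapping.lookup m i) * Poly_Mapping.lookup p m" for m
  have "Poly_Mapping.lookup (pderiv_var i p) k
      = (\<Sum>m\<in>Poly_Mapping.keys p. if m - exp_var i = k then c m else 0)"
    unfolding pderiv_var_def c_def lookup_sum by (simp add: lookup_single when_def)
  also have "\<dots> = (\<Sum>m\<in>Poly_Mapping.keys p. if m = k + exp_var i then c m else 0)"
  proof (rule sum.cong)
    fix m
    show "(if m - exp_var i = k then c m else 0) = (if m = k + exp_var i then c m else 0)"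
      using minus_exp_var_eq_iff[of m i k] by (cases "Poly_Mapping.lookup m i") (auto simp: c_def)
  qed simp
  also have "\<dots> = c (k + exp_var i)"
    by (auto simp: c_def in_keys_iff)
  finally show ?thesis
    by (simp add: c_def lookup_add)
qed

lemma pderiv_var_zero [simp]: "pderiv_var i 0 = 0"
  by (rule poly_mapping_eqI) (simp add: lookup_pderiv_var)

lemma pderiv_var_add: "pderiv_var i (p + q) = pderiv_var i p + pderiv_var i q"
  by (rule poly_mapping_eqI) (simp add: lookup_pderiv_var lookup_add distrib_left)

lemma pderiv_var_single:
  "pderiv_var i (Poly_Mapping.single m c) =
     Poly_Mapping.single (m - exp_var i) (of_nat (Poly_Mapping.lookup m i) * c)"
proof (rule poly_mapping_eqI)
  fix k
  show "Poly_Mapping.lookup (pderiv_var i (Poly_Mapping.single m c)) k =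
    Poly_Mapping.lookup (Poly_Mapping.single (m - exp_var i) (of_nat (Poly_Mapping.lookup m i) * c)) k"
  proof (cases "Poly_Mapping.lookup m i")
    case 0
    then have "m \<noteq> k + exp_var i" by (auto simp: lookup_add)
    then show ?thesis using 0 by (auto simp: lookup_pderiv_var lookup_single when_def)
  next
    case Suc
    then show ?thesis using minus_exp_var_eq_iff[of m i k]
      by (auto simp: lookup_pderiv_var lookup_single when_def lookup_add)
  qed
qed

lemma pderiv_var_one [simp]: "pderiv_var i 1 = 0"
  using pderiv_var_single[of i 0 1] by simp

text \<open>If \<open>a\<close> does not involve \<open>X\<^sub>i\<close> both sides vanish, so their differing exponents are harmless.\<close>
lemma single_minus_exp_var_mult:
  "Poly_Mapping.single (a - exp_var i) (of_nat (Poly_Mapping.lookup a i) * c) * Poly_Mapping.single b d =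
    Poly_Mapping.single (a + b - exp_var i) (of_nat (Poly_Mapping.lookup a i) * c * (d :: 'a::comm_ring_1))"
proof (cases "Poly_Mapping.lookup a i = 0")
  case False
  then have "a - exp_var i + b = a + b - exp_var i"
    by (intro poly_mapping_eqI) (auto simp: lookup_minus lookup_add lookup_single when_def)
  then show ?thesis by (simp add: mult_single)
qed (simp add: mult_single)

lemma pderiv_var_mult_single:
  "pderiv_var i (Poly_Mapping.single a c * Poly_Mapping.single b d) =
    pderiv_var i (Poly_Mapping.single a c) * Poly_Mapping.single b d
    + Poly_Mapping.single a c * pderiv_var i (Poly_Mapping.single b (d :: 'a::comm_ring_1))"
proof -
  let ?k = "a + b - exp_var i" and ?a = "Poly_Mapping.lookup a i" and ?b = "Poly_Mapping.lookup b i"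
  have "pderiv_var i (Poly_Mapping.single a c * Poly_Mapping.single b d)
      = Poly_Mapping.single ?k (of_nat (?a + ?b) * (c * d))"
    by (simp add: mult_single pderiv_var_single lookup_add)
  also have "\<dots> = Poly_Mapping.single ?k (of_nat ?a * c * d)
      + Poly_Mapping.single (b + a - exp_var i) (of_nat ?b * d * c)"
    by (simp only: add.commute[of b a] flip: single_add) (simp add: algebra_simps)
  also have "\<dots> = pderiv_var i (Poly_Mapping.single a c) * Poly_Mapping.single b d
      + Poly_Mapping.single a c * pderiv_var i (Poly_Mapping.single b d)"
    using single_minus_exp_var_mult[of a i c b d] single_minus_exp_var_mult[of b i d a c]
    by (simp add: pderiv_var_single mult.commute[of "Poly_Mapping.single a c"])
  finally show ?thesis .
qed

lemma pderiv_var_mult_single_left: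
  "pderiv_var i (Poly_Mapping.single a c * q) =
    pderiv_var i (Poly_Mapping.single a c) * q + Poly_Mapping.single a c * pderiv_var i q"
proof (induction q rule: poly_mapping_induct)
  case (add f g)
  then show ?case by (simp add: distrib_left pderiv_var_add algebra_simps)
qed (simp_all add: pderiv_var_mult_single)

lemma pderiv_var_mult:
  "pderiv_var i (p * q) = pderiv_var i p * q + p * pderiv_var i q"
proof (induction p rule: poly_mapping_induct)
  case (add f g)
  then show ?case by (simp add: distrib_right pderiv_var_add algebra_simps)
qed (simp_all add: pderiv_var_mult_single_left)

lemma pderiv_var_power_Suc:
  "pderiv_var i (u ^ Suc s) = of_nat (Suc s) * u ^ s * pderiv_var i u"
proof (induction s)
  case (Suc s)
  have "pderiv_var i (u ^ Suc (Suc s)) = pderiv_var i u * u ^ Suc s + u * pderiv_var i (u ^ Suc s)"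
    by (simp only: power_Suc[of u "Suc s"] pderiv_var_mult)
  also have "\<dots> = of_nat (Suc (Suc s)) * u ^ Suc s * pderiv_var i u"
    unfolding Suc by (simp add: algebra_simps)
  finally show ?case .
qed simp

lemma lookup_pderiv_var_funpow:
  "Poly_Mapping.lookup ((pderiv_var i ^^ k) p) m =
     pochhammer (of_nat (Poly_Mapping.lookup m i) + 1) k * Poly_Mapping.lookup p (m + Poly_Mapping.single i k)"
proof (induction k arbitrary: m)
  case (Suc k)
  have shift: "m + exp_var i + Poly_Mapping.single i k = m + Poly_Mapping.single i (Suc k)"
    by (simp add: add.assoc single_add[symmetric])
  have "Poly_Mapping.lookup ((pderiv_var i ^^ Suc k) p) m =
     of_nat (Poly_Mapping.lookup m i + 1) * Poly_Mapping.lookup ((pderiv_var i ^^ k) p) (m + exp_var i)"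
    by (simp add: lookup_pderiv_var)
  also have "\<dots> = (of_nat (Poly_Mapping.lookup m i) + 1)
      * pochhammer (of_nat (Poly_Mapping.lookup m i) + 1 + 1) k
      * Poly_Mapping.lookup p (m + Poly_Mapping.single i (Suc k))"
    unfolding Suc shift[symmetric] by (simp add: lookup_add algebra_simps)
  also have "\<dots> = pochhammer (of_nat (Poly_Mapping.lookup m i) + 1) (Suc k)
      * Poly_Mapping.lookup p (m + Poly_Mapping.single i (Suc k))"
    by (simp add: pochhammer_rec)
  finally show ?case .
qed simp

lemma polyring_single: "Poly_Mapping.keys m \<subseteq> {..<n} \<Longrightarrow> Poly_Mapping.single m c \<in> polyring n"
  by (simp add: polyring_def)

lemma polyring_const: "Poly_Mapping.single 0 c \<in> polyring n"
  by (simp add: polyring_def)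

lemma polyring_of_nat: "of_nat k \<in> polyring n"
  using polyring_const[of "of_nat k" n] by simp

lemma polyring_add: "p \<in> polyring n \<Longrightarrow> q \<in> polyring n \<Longrightarrow> p + q \<in> polyring n"
  unfolding polyring_def using keys_add[of p q] by blast

lemma polyring_mult: "p \<in> polyring n \<Longrightarrow> q \<in> polyring n \<Longrightarrow> p * q \<in> polyring n"
  unfolding polyring_def using keys_mult[of p q] by (fastforce simp: keys_add_nat)

lemma polyring_pderiv_var:
  assumes "p \<in> polyring n"
  shows "pderiv_var i p \<in> polyring n"
  unfolding polyring_def
proof (intro CollectI ballI)
  fix m
  assume "m \<in> Poly_Mapping.keys (pderiv_var i p)"
  then have "m + exp_var i \<in> Poly_Mapping.keys p"
    by (auto simp: in_keys_iff lookup_pderiv_var)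
  with assms have "Poly_Mapping.keys (m + exp_var i) \<subseteq> {..<n}"
    by (simp add: polyring_def)
  then show "Poly_Mapping.keys m \<subseteq> {..<n}"
    by (simp add: keys_add_nat)
qed

lemma is_ideal_polyring: "is_ideal (polyring n) (polyring n)"
  unfolding is_ideal_def using polyring_const[of 0 n] by (simp add: polyring_add polyring_mult)

lemma is_ideal_subset: "is_ideal R I \<Longrightarrow> x \<in> I \<Longrightarrow> x \<in> R"
  by (auto simp: is_ideal_def)

lemma is_ideal_add: "is_ideal R I \<Longrightarrow> x \<in> I \<Longrightarrow> y \<in> I \<Longrightarrow> x + y \<in> I"
  by (auto simp: is_ideal_def)

lemma is_ideal_mult: "is_ideal R I \<Longrightarrow> r \<in> R \<Longrightarrow> x \<in> I \<Longrightarrow> r * x \<in> I"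
  by (auto simp: is_ideal_def)

lemma is_ideal_ideal_generated:
  assumes "is_ideal R R" and "S \<subseteq> R"
  shows "is_ideal R (ideal_generated R S)"
  unfolding is_ideal_def
proof (intro conjI ballI)
  show "ideal_generated R S \<subseteq> R"
    using assms by (auto simp: ideal_generated_def)
  show "0 \<in> ideal_generated R S"
    by (auto simp: ideal_generated_def is_ideal_def)
  show "a + b \<in> ideal_generated R S" if "a \<in> ideal_generated R S" "b \<in> ideal_generated R S" for a b
    using that by (auto simp: ideal_generated_def is_ideal_def)
  show "r * a \<in> ideal_generated R S" if "r \<in> R" "a \<in> ideal_generated R S" for r a
    using that by (auto simp: ideal_generated_def is_ideal_def)
qed

lemma ideal_generated_superset: "S \<subseteq> ideal_generated R S"
  by (auto simp: ideal_generated_def)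

lemma ideal_generated_least: "is_ideal R J \<Longrightarrow> S \<subseteq> J \<Longrightarrow> ideal_generated R S \<subseteq> J"
  by (auto simp: ideal_generated_def)

lemma polyring_ideal_diff:
  assumes "is_ideal (polyring n) I" "x \<in> I" "y \<in> I"
  shows "x - y \<in> I"
proof -
  have "x + Poly_Mapping.single 0 (-1) * y \<in> I"
    using is_ideal_add[OF assms(1,2)] is_ideal_mult[OF assms(1) polyring_const assms(3)] .
  then show ?thesis by (simp add: single_uminus)
qed

lemma polyring_ideal_of_nat_cancel:
  fixes x :: "'a::field_char_0 mpoly"
  assumes "is_ideal (polyring n) I" "of_nat r * x \<in> I" "r > 0"
  shows "x \<in> I"
proof -
  have "Poly_Mapping.single 0 (inverse (of_nat r)) * (of_nat r * x) \<in> I"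
    by (rule is_ideal_mult[OF assms(1) polyring_const assms(2)])
  also have "Poly_Mapping.single 0 (inverse (of_nat r)) * (of_nat r * x)
      = (Poly_Mapping.single 0 (inverse (of_nat r)) * Poly_Mapping.single 0 (of_nat r)) * x"
    by (simp add: mult.assoc)
  also have "\<dots> = x"
    using assms(3) by (simp add: mult_single del: single_of_nat)
  finally show ?thesis .
qed

lemma pderiv_var_power:
  "u * pderiv_var i (u ^ m) = of_nat m * u ^ m * pderiv_var i u"
proof (cases m)
  case (Suc s)
  show ?thesis unfolding Suc pderiv_var_power_Suc by (simp only: power_Suc algebra_simps)
qed simp

lemma pderiv_var_power_mem_ideal:
  fixes a :: "'a::field_char_0 mpoly"
  assumes I: "is_ideal (polyring n) I" and stable: "pderiv_var i ` I \<subseteq> I"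
    and a: "a \<in> polyring n" and "a ^ k \<in> I"
  shows "pderiv_var i a ^ (2 * k) \<in> I"
proof -
  define b where "b = pderiv_var i a"
  have b: "b \<in> polyring n" "pderiv_var i b \<in> polyring n"
    unfolding b_def using a by (simp_all add: polyring_pderiv_var)
  have "a ^ (k - j) * b ^ (2 * j) \<in> I" if "j \<le> k" for j
    using that
  proof (induction j)
    case 0
    then show ?case using \<open>a ^ k \<in> I\<close> by simp
  next
    case (Suc j)
    define s where "s = k - Suc j"
    define g where "g = a ^ Suc s * b ^ (2 * j)"
    have g: "g \<in> I" using Suc by (simp add: g_def s_def Suc_diff_Suc)
    have eq: "b * pderiv_var i g
        = of_nat (Suc s) * (a ^ s * b ^ (2 * Suc j)) + (of_nat (2 * j) * pderiv_var i b) * g"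
    proof -
      have "b * pderiv_var i g
          = b * pderiv_var i (a ^ Suc s) * b ^ (2 * j) + a ^ Suc s * (b * pderiv_var i (b ^ (2 * j)))"
        unfolding g_def pderiv_var_mult by (simp add: algebra_simps)
      also have "\<dots> = of_nat (Suc s) * (a ^ s * b ^ (2 * Suc j)) + (of_nat (2 * j) * pderiv_var i b) * g"
        unfolding pderiv_var_power pderiv_var_power_Suc g_def b_def by (simp add: algebra_simps)
      finally show ?thesis .
    qed
    have "b * pderiv_var i g \<in> I"
      using is_ideal_mult[OF I b(1)] stable g by blast
    moreover have "(of_nat (2 * j) * pderiv_var i b) * g \<in> I"
      by (rule is_ideal_mult[OF I polyring_mult[OF polyring_of_nat b(2)] g])
    ultimately have "b * pderiv_var i g - (of_nat (2 * j) * pderiv_var i b) * g \<in> I"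
      by (rule polyring_ideal_diff[OF I])
    then have "of_nat (Suc s) * (a ^ s * b ^ (2 * Suc j)) \<in> I"
      unfolding eq by simp
    then have "a ^ s * b ^ (2 * Suc j) \<in> I"
      by (rule polyring_ideal_of_nat_cancel[OF I]) simp
    then show ?case
      by (simp add: s_def)
  qed
  from this[of k] show ?thesis by (simp add: b_def)
qed

lemma pderiv_var_radical_stable:
  fixes I :: "'a::field_char_0 mpoly set"
  assumes "is_ideal (polyring n) I" and "pderiv_var i ` I \<subseteq> I"
  shows "pderiv_var i ` radical (polyring n) I \<subseteq> radical (polyring n) I"
  using pderiv_var_power_mem_ideal[OF assms] polyring_pderiv_var
  by (fastforce simp: radical_def)

text \<open>The Hasse derivative \<open>D\<^sup>k f / k!\<close>; for \<open>f\<close> of degree at most \<open>k\<close> in \<open>X\<^sub>i\<close> it is the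
  coefficient of \<open>X\<^sub>i\<^sup>k\<close>.\<close>
definition hasse_deriv :: "nat \<Rightarrow> nat \<Rightarrow> 'a::field_char_0 mpoly \<Rightarrow> 'a mpoly" where
  "hasse_deriv i k f = Poly_Mapping.single 0 (inverse (fact k)) * (pderiv_var i ^^ k) f"

lemma hasse_deriv_0 [simp]: "hasse_deriv i 0 f = f"
  by (simp add: hasse_deriv_def)

lemma hasse_deriv_mem_ideal:
  assumes "is_ideal (polyring n) P" and "pderiv_var i ` P \<subseteq> P" and "f \<in> P"
  shows "hasse_deriv i k f \<in> P"
proof -
  have "(pderiv_var i ^^ k) f \<in> P"
    using assms(2,3) by (induction k) auto
  then show ?thesis
    unfolding hasse_deriv_def by (rule is_ideal_mult[OF assms(1) polyring_const])
qed

lemma lookup_hasse_deriv_top: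
  assumes "var_degree_le i k f"
  shows "Poly_Mapping.lookup (hasse_deriv i k f) m =
    (if Poly_Mapping.lookup m i = 0 then Poly_Mapping.lookup f (m + Poly_Mapping.single i k) else 0)"
proof (cases "Poly_Mapping.lookup m i = 0")
  case False
  then have "Poly_Mapping.lookup f (m + Poly_Mapping.single i k) = 0"
    using assms by (force simp: in_keys_iff lookup_add)
  then show ?thesis by (simp add: hasse_deriv_def lookup_const_mult lookup_pderiv_var_funpow)
qed (simp add: hasse_deriv_def lookup_const_mult lookup_pderiv_var_funpow flip: pochhammer_fact)

lemma hasse_deriv_top_in_polyring:
  assumes "f \<in> polyring (Suc i)" and "var_degree_le i k f"
  shows "hasse_deriv i k f \<in> polyring i"
  unfolding polyring_def
proof (intro CollectI ballI subsetI)
  fix m j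
  assume m: "m \<in> Poly_Mapping.keys (hasse_deriv i k f)" and j: "j \<in> Poly_Mapping.keys m"
  have mi: "Poly_Mapping.lookup m i = 0" and "m + Poly_Mapping.single i k \<in> Poly_Mapping.keys f"
    using m lookup_hasse_deriv_top[OF assms(2), of m] by (auto simp: in_keys_iff split: if_splits)
  then have "Poly_Mapping.keys (m + Poly_Mapping.single i k) \<subseteq> {..<Suc i}"
    using assms(1) unfolding polyring_def by blast
  then have "j < Suc i"
    using j by (auto simp: keys_add_nat)
  moreover have "j \<noteq> i"
    using mi j by (auto simp: in_keys_iff)
  ultimately show "j \<in> {..<i}"
    by simp
qed

lemma var_degree_le_minus_top:
  fixes f :: "'a::field_char_0 mpoly"
  assumes deg: "var_degree_le i (Suc d) f"
  defines "X \<equiv> Poly_Mapping.single (Poly_Mapping.single i (Suc d)) 1"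
  shows "var_degree_le i d (f - X * hasse_deriv i (Suc d) f)"
proof (rule ballI, rule ccontr)
  let ?c = "hasse_deriv i (Suc d) f"
  fix m
  assume m: "m \<in> Poly_Mapping.keys (f - X * ?c)" and "\<not> Poly_Mapping.lookup m i \<le> d"
  then have ge: "Poly_Mapping.lookup m i \<ge> Suc d" by simp
  from m have "m \<in> Poly_Mapping.keys f \<or> m \<in> Poly_Mapping.keys (X * ?c)"
    by (auto simp: in_keys_iff lookup_minus)
  then obtain t where t: "m = Poly_Mapping.single i (Suc d) + t" "Poly_Mapping.lookup t i = 0"
  proof
    assume "m \<in> Poly_Mapping.keys f"
    with deg ge have "Poly_Mapping.lookup m i = Suc d" by force
    then show thesis
      by (intro that[of "m - Poly_Mapping.single i (Suc d)"] poly_mapping_eqI)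
        (auto simp: lookup_add lookup_minus lookup_single when_def)
  next
    assume "m \<in> Poly_Mapping.keys (X * ?c)"
    then obtain t where "t \<in> Poly_Mapping.keys ?c" "m = Poly_Mapping.single i (Suc d) + t"
      using keys_monom_mult unfolding X_def by blast
    then show thesis
      using that lookup_hasse_deriv_top[OF deg, of t] by (auto simp: in_keys_iff split: if_splits)
  qed
  have "Poly_Mapping.lookup (f - X * ?c) m = Poly_Mapping.lookup f m - Poly_Mapping.lookup ?c t"
    unfolding lookup_minus t(1) X_def lookup_monom_mult ..
  also have "\<dots> = 0"
    using lookup_hasse_deriv_top[OF deg, of t] t by (simp add: add.commute)
  finally show False using m by (simp add: in_keys_iff)
qed

lemma mem_ideal_generated_if_var_degree_le:
  fixes P :: "'a::field_char_0 mpoly set"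
  assumes P: "is_ideal (polyring (Suc i)) P" and stable: "pderiv_var i ` P \<subseteq> P"
  shows "f \<in> P \<Longrightarrow> var_degree_le i d f \<Longrightarrow> f \<in> ideal_generated (polyring (Suc i)) (P \<inter> polyring i)"
proof (induction d arbitrary: f)
  let ?J = "ideal_generated (polyring (Suc i)) (P \<inter> polyring i)"
  have J: "is_ideal (polyring (Suc i)) ?J"
    using is_ideal_subset[OF P] by (intro is_ideal_ideal_generated is_ideal_polyring) blast
  have P_J: "x \<in> ?J" if "x \<in> P" "x \<in> polyring i" for x
    using that ideal_generated_superset by blast
  {
    case 0
    have "hasse_deriv i 0 f \<in> polyring i"
      by (rule hasse_deriv_top_in_polyring[OF is_ideal_subset[OF P 0(1)] 0(2)])
    with 0(1) show ?case
      by (simp add: P_J)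
  next
    case (Suc d)
    define c where "c = hasse_deriv i (Suc d) f"
    define X where "X = Poly_Mapping.single (Poly_Mapping.single i (Suc d)) (1 :: 'a)"
    have cP: "c \<in> P"
      unfolding c_def by (rule hasse_deriv_mem_ideal[OF P stable Suc.prems(1)])
    have cR: "c \<in> polyring i"
      unfolding c_def by (rule hasse_deriv_top_in_polyring[OF is_ideal_subset[OF P Suc.prems(1)] Suc.prems(2)])
    have X: "X \<in> polyring (Suc i)"
      unfolding X_def by (rule polyring_single) auto
    have "f - X * c \<in> P"
      by (rule polyring_ideal_diff[OF P Suc.prems(1) is_ideal_mult[OF P X cP]])
    moreover have "var_degree_le i d (f - X * c)"
      unfolding c_def X_def by (rule var_degree_le_minus_top[OF Suc.prems(2)])
    ultimately have "f - X * c \<in> ?J"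
      by (rule Suc.IH)
    moreover have "X * c \<in> ?J"
      by (rule is_ideal_mult[OF J X P_J[OF cP cR]])
    ultimately have "(f - X * c) + X * c \<in> ?J"
      by (rule is_ideal_add[OF J])
    then show ?case
      by simp
  }
qed

lemma pderiv_var_stable_ideal_extended:
  fixes P :: "'a::field_char_0 mpoly set"
  assumes "is_ideal (polyring (Suc i)) P" and "pderiv_var i ` P \<subseteq> P"
  shows "P = ideal_generated (polyring (Suc i)) (P \<inter> polyring i)"
proof
  show "P \<subseteq> ideal_generated (polyring (Suc i)) (P \<inter> polyring i)"
  proof
    fix f assume "f \<in> P"
    moreover have "var_degree_le i (Max ((\<lambda>m. Poly_Mapping.lookup m i) ` Poly_Mapping.keys f)) f"
      by simp
    ultimately show "f \<in> ideal_generated (polyring (Suc i)) (P \<inter> polyring i)"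
      by (rule mem_ideal_generated_if_var_degree_le[OF assms])
  qed
  show "ideal_generated (polyring (Suc i)) (P \<inter> polyring i) \<subseteq> P"
    by (rule ideal_generated_least[OF assms(1)]) blast
qed

theorem corollary7p3:
  fixes n :: nat and P I :: "'a::field_char_0 mpoly set"
  assumes "n \<ge> 1"
    and "is_prime_ideal (polyring n) P"
    and "is_ideal (polyring n) I"
    and "radical (polyring n) I = P"
    and "pderiv_var (n - 1) ` I \<subseteq> I"
  shows "P = ideal_generated (polyring n) (P \<inter> polyring (n - 1))"
proof -
  obtain i where n: "n = Suc i"
    using assms(1) by (cases n) auto
  have "is_ideal (polyring n) P"
    using assms(2) unfolding is_prime_ideal_def by blast
  moreover have "pderiv_var (n - 1) ` P \<subseteq> P"
    using pderiv_var_radical_stable[OF assms(3,5)] unfolding assms(4) .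
  ultimately show ?thesis
    unfolding n diff_Suc_1 by (rule pderiv_var_stable_ideal_extended)
qed

end
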